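(* Let $0<\epsilon<1$ and let $\mathcal C$ be a family of Boolean functions such that every $f:\{0,1\}^n\to\{0,1\}$ in $\mathcal C$ satisfies $\deg_\pm(f)\ge cn^\alpha$, for some constants $c>0$ and $\alpha>0$. Then for every $f\in\mathcal C$, $D(f)\le O(M_\epsilon(f)^{1/\alpha})$.
   Context: $\mathsf N_\epsilon(f)$ is the minimum degree of a real polynomial $p$ with $|p(x)|\le\epsilon$ whenever $f(x)=0$ and $|p(x)|\ge1$ whenever $f(x)=1$; $\overline f=1-f$; $M_\epsilon(f)=\max\{\mathsf N_\epsilon(f),\mathsf N_\epsilon(\overline f)\}$. The sign degree $\deg_\pm(f)$ is the minimum degree of a real polynomial $p$ such that $p(x)<0$ iff $f(x)=1$ for all $x\in\{0,1\}^n$. $D(f)$ is deterministic decision tree complexity. The constant in $O(\cdot)$ depends on $c,\alpha$. *)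

theory Defs
  imports Main "HOL-Library.Discrete_Functions"
begin

text \<open>Inputs are modelled as nat \<Rightarrow> bool; the Boolean cube of dimension n is the set
of inputs that are False outside the first n coordinates. A Boolean function on n
variables is a map (nat \<Rightarrow> bool) \<Rightarrow> bool, only its values on the cube matter.
True plays the role of 1.\<close>

definition cube :: "nat \<Rightarrow> (nat \<Rightarrow> bool) set" where
  "cube n = {x. \<forall>i. n \<le> i \<longrightarrow> \<not> x i}"

text \<open>Real polynomials on the cube, in multilinear (monomial) representation:
a coefficient for each monomial prod over S of x_i, S a subset of the variables.\<close>

definition poly_eval :: "nat \<Rightarrow> (nat set \<Rightarrow> real) \<Rightarrow> (nat \<Rightarrow> bool) \<Rightarrow> real" where
  "poly_eval n a x = (\<Sum>S\<in>Pow {..<n}. a S * (\<Prod>i\<in>S. if x i then 1 else 0))"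

definition poly_deg_le :: "nat \<Rightarrow> (nat set \<Rightarrow> real) \<Rightarrow> nat \<Rightarrow> bool" where
  "poly_deg_le n a d \<longleftrightarrow> (\<forall>S. S \<subseteq> {..<n} \<and> a S \<noteq> 0 \<longrightarrow> card S \<le> d)"

definition N_eps :: "real \<Rightarrow> nat \<Rightarrow> ((nat \<Rightarrow> bool) \<Rightarrow> bool) \<Rightarrow> nat" where
  "N_eps eps n f = (LEAST d. \<exists>a. poly_deg_le n a d \<and>
      (\<forall>x\<in>cube n. (\<not> f x \<longrightarrow> \<bar>poly_eval n a x\<bar> \<le> eps) \<and>
                  (f x \<longrightarrow> \<bar>poly_eval n a x\<bar> \<ge> 1)))"

definition M_eps :: "real \<Rightarrow> nat \<Rightarrow> ((nat \<Rightarrow> bool) \<Rightarrow> bool) \<Rightarrow> nat" where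
  "M_eps eps n f = max (N_eps eps n f) (N_eps eps n (\<lambda>x. \<not> f x))"

definition sign_deg :: "nat \<Rightarrow> ((nat \<Rightarrow> bool) \<Rightarrow> bool) \<Rightarrow> nat" where
  "sign_deg n f = (LEAST d. \<exists>a. poly_deg_le n a d \<and>
      (\<forall>x\<in>cube n. poly_eval n a x < 0 \<longleftrightarrow> f x))"

datatype dtree = Leaf bool | Query nat dtree dtree

fun dt_eval :: "dtree \<Rightarrow> (nat \<Rightarrow> bool) \<Rightarrow> bool" where
  "dt_eval (Leaf b) x = b"
| "dt_eval (Query i t0 t1) x = (if x i then dt_eval t1 x else dt_eval t0 x)"

fun dt_depth :: "dtree \<Rightarrow> nat" where
  "dt_depth (Leaf b) = 0"
| "dt_depth (Query i t0 t1) = Suc (max (dt_depth t0) (dt_depth t1))"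

definition D_dt :: "nat \<Rightarrow> ((nat \<Rightarrow> bool) \<Rightarrow> bool) \<Rightarrow> nat" where
  "D_dt n f = (LEAST d. \<exists>t. dt_depth t = d \<and> (\<forall>x\<in>cube n. dt_eval t x = f x))"

end

theory Submission
  imports Defs
begin

text \<open>Every function on the cube is computed by the decision tree that queries all n
variables, so D(f) \<le> n. If p is a one-sided \<epsilon>-approximation of f, then
((1 + \<epsilon>)/2)^2 - p^2 sign-represents f, hence deg_\<plusminus>(f) \<le> 2 N_\<epsilon>(f) \<le> 2 M_\<epsilon>(f).
Combined with c n^\<alpha> \<le> deg_\<plusminus>(f) this gives D(f) \<le> n \<le> (2/c)^(1/\<alpha>) M_\<epsilon>(f)^(1/\<alpha>).\<close>

lemma prod_indicator_eq:
  assumes "finite S"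
  shows "(\<Prod>i\<in>S. if x i then 1 else 0 :: 'a :: comm_semiring_1) = (if \<forall>i\<in>S. x i then 1 else 0)"
  using assms by (induction S rule: finite_induct) auto

lemma sum_group_by_union:
  assumes "finite A" "finite B" "\<And>S T. (S, T) \<in> A \<Longrightarrow> S \<union> T \<in> B"
  shows "(\<Sum>(S, T)\<in>A. h S T) = (\<Sum>U\<in>B. \<Sum>(S, T) \<in> {(S, T) \<in> A. S \<union> T = U}. h S T)"
  using assms sum.group[of A B "\<lambda>(S, T). S \<union> T" "\<lambda>(S, T). h S T"]
  by (auto simp: case_prod_unfold image_subset_iff)

definition poly_mult :: "nat \<Rightarrow> (nat set \<Rightarrow> real) \<Rightarrow> (nat set \<Rightarrow> real) \<Rightarrow> nat set \<Rightarrow> real" where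
  "poly_mult n a b U =
     (\<Sum>(S, T) \<in> {(S, T) \<in> Pow {..<n} \<times> Pow {..<n}. S \<union> T = U}. a S * b T)"

definition poly_const :: "real \<Rightarrow> nat set \<Rightarrow> real" where
  "poly_const r S = (if S = {} then r else 0)"

lemma poly_eval_mult: "poly_eval n (poly_mult n a b) x = poly_eval n a x * poly_eval n b x"
proof -
  let ?P = "\<lambda>S. \<Prod>i\<in>S. if x i then 1 else 0 :: real"
  have P_Un: "?P S * ?P T = ?P (S \<union> T)" if "S \<in> Pow {..<n}" "T \<in> Pow {..<n}" for S T
    using that finite_subset[of _ "{..<n}"] by (auto simp: prod_indicator_eq)
  have "poly_eval n a x * poly_eval n b x =
        (\<Sum>S\<in>Pow {..<n}. \<Sum>T\<in>Pow {..<n}. a S * b T * ?P (S \<union> T))"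
    unfolding poly_eval_def sum_product
    by (intro sum.cong refl) (simp add: P_Un[symmetric] algebra_simps)
  also have "\<dots> = (\<Sum>(S, T) \<in> Pow {..<n} \<times> Pow {..<n}. a S * b T * ?P (S \<union> T))"
    by (simp add: sum.cartesian_product)
  also have "\<dots> = (\<Sum>U\<in>Pow {..<n}.
      \<Sum>(S, T) \<in> {(S, T) \<in> Pow {..<n} \<times> Pow {..<n}. S \<union> T = U}. a S * b T * ?P (S \<union> T))"
    by (rule sum_group_by_union) auto
  also have "\<dots> = poly_eval n (poly_mult n a b) x"
    unfolding poly_eval_def poly_mult_def sum_distrib_right
    by (intro sum.cong refl) auto
  finally show ?thesis ..
qed

lemma poly_deg_le_mult:
  assumes "poly_deg_le n a d" "poly_deg_le n b e"
  shows "poly_deg_le n (poly_mult n a b) (d + e)"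
  unfolding poly_deg_le_def
proof (intro allI impI)
  fix U assume U: "U \<subseteq> {..<n} \<and> poly_mult n a b U \<noteq> 0"
  then obtain S T where ST: "S \<subseteq> {..<n}" "T \<subseteq> {..<n}" "S \<union> T = U" "a S * b T \<noteq> 0"
    unfolding poly_mult_def by (auto elim!: sum.not_neutral_contains_not_neutral)
  have "card U \<le> card S + card T"
    using ST(3) card_Un_le by blast
  also have "\<dots> \<le> d + e"
    using assms ST unfolding poly_deg_le_def by (intro add_mono) auto
  finally show "card U \<le> d + e" .
qed

lemma poly_eval_const: "poly_eval n (poly_const r) x = r"
proof -
  have "poly_eval n (poly_const r) x = (\<Sum>S\<in>Pow {..<n}. if S = {} then r else 0)"
    unfolding poly_eval_def poly_const_def by (intro sum.cong) auto
  then show ?thesis by simp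
qed

lemma poly_eval_diff: "poly_eval n (\<lambda>S. a S - b S) x = poly_eval n a x - poly_eval n b x"
  unfolding poly_eval_def by (simp add: left_diff_distrib sum_subtractf)

lemma poly_deg_le_const_diff:
  assumes "poly_deg_le n b d"
  shows "poly_deg_le n (\<lambda>S. poly_const r S - b S) d"
  using assms unfolding poly_deg_le_def poly_const_def by auto

lemma poly_deg_le_num_vars: "poly_deg_le n a n"
  unfolding poly_deg_le_def
proof (intro allI impI)
  fix S assume "S \<subseteq> {..<n} \<and> a S \<noteq> 0"
  then have "card S \<le> card {..<n}"
    by (intro card_mono) auto
  then show "card S \<le> n"
    by simp
qed

lemma sum_Pow_insert:
  assumes "finite X" "u \<notin> X"
  shows "(\<Sum>S\<in>Pow (insert u X). g S) = (\<Sum>S\<in>Pow X. g S) + (\<Sum>S\<in>Pow X. g (insert u S))"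
proof -
  have "inj_on (insert u) (Pow X)"
    using assms(2) unfolding inj_on_def by auto
  moreover have "Pow X \<inter> insert u ` Pow X = {}"
    using assms(2) by auto
  ultimately show ?thesis
    using assms(1) by (simp add: Pow_insert sum.union_disjoint sum.reindex)
qed

lemma sum_Pow_insert_split:
  assumes "finite X" "u \<notin> X"
  shows "(\<Sum>S\<in>Pow (insert u X). if u \<in> S then b (S - {u}) else a S) =
         (\<Sum>S\<in>Pow X. a S) + (\<Sum>S\<in>Pow X. b S)"
proof -
  have "u \<notin> S" if "S \<in> Pow X" for S
    using that assms(2) by blast
  then show ?thesis
    unfolding sum_Pow_insert[OF assms] by (auto intro!: sum.cong arg_cong2[where f = "(+)"])
qed

lemma ex_sum_Pow_eq:
  fixes g :: "'a set \<Rightarrow> 'b :: ab_group_add"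
  assumes "finite U"
  shows "\<exists>a. \<forall>X\<subseteq>U. (\<Sum>S\<in>Pow X. a S) = g X"
  using assms
proof (induction U arbitrary: g rule: finite_induct)
  case empty
  show ?case by (rule exI[of _ "\<lambda>_. g {}"]) auto
next
  case (insert u U)
  obtain a where a: "\<forall>X\<subseteq>U. (\<Sum>S\<in>Pow X. a S) = g X"
    using insert.IH[of g] by blast
  obtain b where b: "\<forall>X\<subseteq>U. (\<Sum>S\<in>Pow X. b S) = g (insert u X) - g X"
    using insert.IH[of "\<lambda>X. g (insert u X) - g X"] by blast
  \<comment> \<open>monomials containing u carry the increment g (insert u X) - g X\<close>
  define ab where "ab S = (if u \<in> S then b (S - {u}) else a S)" for S
  have "(\<Sum>S\<in>Pow X. ab S) = g X" if X: "X \<subseteq> insert u U" for X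
  proof (cases "u \<in> X")
    case False
    then have "(\<Sum>S\<in>Pow X. ab S) = (\<Sum>S\<in>Pow X. a S)"
      by (intro sum.cong) (auto simp: ab_def)
    also have "\<dots> = g X"
      using a X False by blast
    finally show ?thesis .
  next
    case True
    define X' where "X' = X - {u}"
    have X': "X' \<subseteq> U" "u \<notin> X'" "X = insert u X'"
      using X True by (auto simp: X'_def)
    then have "finite X'"
      using insert.hyps(1) finite_subset by blast
    have "(\<Sum>S\<in>Pow X. ab S) = (\<Sum>S\<in>Pow X'. a S) + (\<Sum>S\<in>Pow X'. b S)"
      unfolding ab_def X'(3) using \<open>finite X'\<close> X'(2) by (rule sum_Pow_insert_split)
    also have "\<dots> = g X"
      using a b X' by simp
    finally show ?thesis .
  qed
  then show ?case by blast
qed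

lemma cube_restrict_eq: "x \<in> cube n \<Longrightarrow> (\<lambda>i. i < n \<and> x i) = x"
  unfolding cube_def by (auto simp: fun_eq_iff) (meson not_le)

lemma ex_poly_eval_eq: "\<exists>a. \<forall>x\<in>cube n. poly_eval n a x = h x"
proof -
  obtain a where a: "\<forall>X\<subseteq>{..<n}. (\<Sum>S\<in>Pow X. a S) = h (\<lambda>i. i \<in> X)"
    using ex_sum_Pow_eq[where U = "{..<n}" and g = "\<lambda>X. h (\<lambda>i. i \<in> X)"] by blast
  have "poly_eval n a x = h x" if x: "x \<in> cube n" for x
  proof -
    define X where "X = {i. i < n \<and> x i}"
    have "poly_eval n a x = (\<Sum>S\<in>Pow {..<n}. if S \<subseteq> X then a S else 0)"
      unfolding poly_eval_def
      by (intro sum.cong refl) (auto simp: prod_indicator_eq X_def finite_subset)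
    also have "\<dots> = (\<Sum>S\<in>Pow X. a S)"
    proof -
      have "Pow {..<n} \<inter> {S. S \<subseteq> X} = Pow X"
        by (auto simp: X_def)
      then show ?thesis
        by (simp add: sum.If_cases)
    qed
    also have "\<dots> = h (\<lambda>i. i \<in> X)"
      using a by (simp add: X_def subset_eq)
    also have "(\<lambda>i. i \<in> X) = x"
      using cube_restrict_eq[OF x] by (simp add: X_def)
    finally show ?thesis .
  qed
  then show ?thesis by blast
qed

lemma N_eps_attained:
  assumes "0 \<le> eps"
  obtains a where "poly_deg_le n a (N_eps eps n f)"
    and "\<forall>x\<in>cube n. (\<not> f x \<longrightarrow> \<bar>poly_eval n a x\<bar> \<le> eps) \<and>
                      (f x \<longrightarrow> \<bar>poly_eval n a x\<bar> \<ge> 1)"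
proof -
  obtain a where "\<forall>x\<in>cube n. poly_eval n a x = (if f x then 1 else 0)"
    using ex_poly_eval_eq[of n "\<lambda>x. if f x then 1 else 0"] by blast
  then have "\<exists>d a. poly_deg_le n a d \<and>
           (\<forall>x\<in>cube n. (\<not> f x \<longrightarrow> \<bar>poly_eval n a x\<bar> \<le> eps) \<and>
                       (f x \<longrightarrow> \<bar>poly_eval n a x\<bar> \<ge> 1))"
    using assms poly_deg_le_num_vars[of n a] by (intro exI[of _ n] exI[of _ a]) auto
  then have "\<exists>a. poly_deg_le n a (N_eps eps n f) \<and>
           (\<forall>x\<in>cube n. (\<not> f x \<longrightarrow> \<bar>poly_eval n a x\<bar> \<le> eps) \<and>
                       (f x \<longrightarrow> \<bar>poly_eval n a x\<bar> \<ge> 1))"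
    unfolding N_eps_def by (rule LeastI_ex)
  then show ?thesis
    using that by blast
qed

lemma sign_deg_le_N_eps:
  assumes "0 \<le> eps" "eps < 1"
  shows "sign_deg n f \<le> 2 * N_eps eps n f"
proof -
  obtain a where deg: "poly_deg_le n a (N_eps eps n f)"
    and approx: "\<forall>x\<in>cube n. (\<not> f x \<longrightarrow> \<bar>poly_eval n a x\<bar> \<le> eps) \<and>
                            (f x \<longrightarrow> \<bar>poly_eval n a x\<bar> \<ge> 1)"
    using N_eps_attained[OF assms(1)] .
  define r where "r = ((1 + eps) / 2)\<^sup>2"
  have "eps\<^sup>2 < r" "r < 1"
    using assms by (auto simp: r_def power_strict_mono power_less_one_iff)
  define q where "q S = poly_const r S - poly_mult n a a S" for S
  have "poly_deg_le n q (2 * N_eps eps n f)"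
    unfolding q_def mult_2 by (intro poly_deg_le_const_diff poly_deg_le_mult deg)
  moreover have "poly_eval n q x < 0 \<longleftrightarrow> f x" if "x \<in> cube n" for x
  proof -
    have q: "poly_eval n q x = r - (poly_eval n a x)\<^sup>2"
      unfolding q_def poly_eval_diff poly_eval_const poly_eval_mult power2_eq_square ..
    show ?thesis
    proof (cases "f x")
      case True
      then have "1 \<le> \<bar>poly_eval n a x\<bar>"
        using approx that by blast
      then have "1 \<le> (poly_eval n a x)\<^sup>2"
        using abs_le_square_iff[of 1 "poly_eval n a x"] by simp
      then show ?thesis using True q \<open>r < 1\<close> by simp
    next
      case False
      then have "\<bar>poly_eval n a x\<bar> \<le> \<bar>eps\<bar>"
        using approx that assms(1) by auto
      then have "(poly_eval n a x)\<^sup>2 \<le> eps\<^sup>2"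
        by (simp add: abs_le_square_iff)
      then show ?thesis using False q \<open>eps\<^sup>2 < r\<close> by simp
    qed
  qed
  ultimately show ?thesis
    unfolding sign_deg_def by (intro Least_le) blast
qed

fun query_all :: "((nat \<Rightarrow> bool) \<Rightarrow> bool) \<Rightarrow> nat \<Rightarrow> dtree" where
  "query_all f 0 = Leaf (f (\<lambda>_. False))"
| "query_all f (Suc m) =
     Query m (query_all (\<lambda>x. f (x(m := False))) m) (query_all (\<lambda>x. f (x(m := True))) m)"

lemma dt_depth_query_all: "dt_depth (query_all f m) = m"
  by (induction m arbitrary: f) auto

lemma dt_eval_query_all: "dt_eval (query_all f m) x = f (\<lambda>i. i < m \<and> x i)"
proof (induction m arbitrary: f)
  case 0
  then show ?case by simp
next
  case (Suc m)
  have "(\<lambda>i. i < m \<and> x i)(m := x m) = (\<lambda>i. i < Suc m \<and> x i)"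
    by (auto simp: fun_eq_iff less_Suc_eq)
  then show ?case
    using Suc by (cases "x m") (simp_all del: fun_upd_apply)
qed

lemma D_dt_le_num_vars: "D_dt n f \<le> n"
  unfolding D_dt_def
proof (rule Least_le, intro exI conjI ballI)
  show "dt_depth (query_all f n) = n"
    by (rule dt_depth_query_all)
  fix x assume "x \<in> cube n"
  then show "dt_eval (query_all f n) x = f x"
    by (simp add: dt_eval_query_all cube_restrict_eq)
qed

lemma le_powr_inverse_of_le:
  fixes c \<alpha> x y :: real
  assumes "0 < c" "0 < \<alpha>" "0 \<le> x" "c * x powr \<alpha> \<le> y"
  shows "x \<le> (y / c) powr (1 / \<alpha>)"
proof -
  have "x = (x powr \<alpha>) powr (1 / \<alpha>)"
    using assms by (simp add: powr_powr)
  also have "\<dots> \<le> (y / c) powr (1 / \<alpha>)"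
    using assms by (intro powr_mono2) (auto simp: field_simps)
  finally show ?thesis .
qed

theorem lemma3p2:
  fixes c \<alpha> :: real
  assumes "c > 0" and "\<alpha> > 0"
  shows "\<exists>K::real. \<forall>(eps::real) (C :: (nat \<times> ((nat \<Rightarrow> bool) \<Rightarrow> bool)) set).
           0 < eps \<and> eps < 1 \<and>
           (\<forall>(n, f)\<in>C. real (sign_deg n f) \<ge> c * real n powr \<alpha>) \<longrightarrow>
           (\<forall>(n, f)\<in>C. real (D_dt n f) \<le> K * real (M_eps eps n f) powr (1 / \<alpha>))"
proof (intro exI allI impI ballI, clarify)
  fix eps :: real and C n f
  assume eps: "0 < eps" "eps < 1"
    and hyp: "\<forall>(n, f)\<in>C. c * real n powr \<alpha> \<le> real (sign_deg n f)" and "(n, f) \<in> C"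
  have "c * real n powr \<alpha> \<le> real (sign_deg n f)"
    using hyp \<open>(n, f) \<in> C\<close> by auto
  also have "\<dots> \<le> 2 * real (N_eps eps n f)"
    using sign_deg_le_N_eps[of eps n f] eps by linarith
  also have "\<dots> \<le> 2 * real (M_eps eps n f)"
    unfolding M_eps_def by simp
  finally have "real n \<le> (2 * real (M_eps eps n f) / c) powr (1 / \<alpha>)"
    using assms by (intro le_powr_inverse_of_le) auto
  also have "\<dots> = (2 / c) powr (1 / \<alpha>) * real (M_eps eps n f) powr (1 / \<alpha>)"
    using assms by (simp add: powr_mult[symmetric])
  finally show "real (D_dt n f) \<le> (2 / c) powr (1 / \<alpha>) * real (M_eps eps n f) powr (1 / \<alpha>)"
    using D_dt_le_num_vars[of n f] by linarith
qed

end
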